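(* Let $r=2$, $F$ free on $x,y$, and let $c=[[x,y],[[x,y],y]]\in F_5$. Let $\phi$ be the endomorphism of $F$ with $x\mapsto xc$, $y\mapsto y$. Then $\phi$ is not an automorphism of $F$ (it extends to an element of $B_4$ not coming from $A_4$), although $\widetilde D\phi-$ has trace $\partial c/\partial x\in\varpi^4$ whose image in $\varpi^4/\varpi^5\cong\mathcal R_4$ lies in $\mathcal R_4^+$; i.e. $J=D\phi$ satisfies $J-\mathbb 1\in M_2(\varpi^4)$ and $\tau(\operatorname{tr}(J-\mathbb 1))\bmod \varpi^5\in\mathcal R_4^+$, yet $J$ is not invertible over $\mathbb ZF$.
   Context: $[u,v]=u^{-1}v^{-1}uv$; $F_1=F$, $F_{n+1}=[F_n,F]$. $A_n=\ker(\mathrm{Aut}(F)\to\mathrm{Aut}(F/F_{n+1}))$; $B_n$ is the kernel of $\mathrm{Aut}_{\mathrm{cont}}(\hat F)\to\mathrm{Aut}(\hat F/\hat F_{n+1})$ for the pronilpotent completion $\hat F$. Fox derivatives: additive maps $\partial/\partial x_j$ on $\mathbb ZF$ with $\partial x_j/\partial x_j=1$, $\partial x_l/\partial x_j=0$ ($l\ne j$), $\partial(uv)/\partial x_j=\frac{\partial u}{\partial x_j}o(v)+u\frac{\partial v}{\partial x_j}$, $o$ the augmentation, $\varpi=\ker o$. The Jacobian of an endomorphism is $D\phi=(\partial(x_i^\phi)/\partial x_j)_{i,j}$, $\widetilde D\phi=D\phi-\mathbb 1$. $\tau:\mathbb ZF\to\mathbb Z\langle\langle X,Y\rangle\rangle$,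 $x\mapsto1+X$, $y\mapsto1+Y$, identifies $\varpi^4/\varpi^5$ with the degree-4 part $\mathcal R_4$. $\mathcal R_4^+=\mathcal R_4(1-\gamma)$ where $\gamma$ cyclically rotates monomials, $(Z_1Z_2Z_3Z_4)^\gamma=Z_2Z_3Z_4Z_1$. *)

theory Defs
  imports Main
begin

text \<open>A letter is (g, e): generator g (False = x, True = y), e = True means inverse.\<close>
type_synonym letter = "bool \<times> bool"
type_synonym word = "letter list"

definition inv_letter :: "letter \<Rightarrow> letter" where
  "inv_letter l = (fst l, \<not> snd l)"

fun reduced :: "word \<Rightarrow> bool" where
  "reduced (a # b # w) = (b \<noteq> inv_letter a \<and> reduced (b # w))"
| "reduced _ = True"

definition red_cons :: "letter \<Rightarrow> word \<Rightarrow> word" where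
  "red_cons l w = (case w of [] \<Rightarrow> [l] | l' # w' \<Rightarrow> (if l' = inv_letter l then w' else l # w))"

definition gmult :: "word \<Rightarrow> word \<Rightarrow> word" where
  "gmult u v = foldr red_cons u v"

definition ginv :: "word \<Rightarrow> word" where
  "ginv u = rev (map inv_letter u)"

definition Fgrp :: "word set" where
  "Fgrp = {w. reduced w}"

definition gen_x :: word where "gen_x = [(False, False)]"
definition gen_y :: word where "gen_y = [(True, False)]"

definition comm :: "word \<Rightarrow> word \<Rightarrow> word" where
  "comm u v = gmult (ginv u) (gmult (ginv v) (gmult u v))"

text \<open>Lower central series: F_1 = F, F_(n+1) = [F_n, F] (subgroup generated by commutators).\<close>
inductive lcs :: "nat \<Rightarrow> word \<Rightarrow> bool" where
  base: "reduced w \<Longrightarrow> lcs (Suc 0) w"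
| commI: "lcs n a \<Longrightarrow> reduced b \<Longrightarrow> lcs (Suc n) (comm a b)"
| multI: "lcs (Suc n) a \<Longrightarrow> lcs (Suc n) b \<Longrightarrow> lcs (Suc n) (gmult a b)"
| invI: "lcs (Suc n) a \<Longrightarrow> lcs (Suc n) (ginv a)"

definition letter_img :: "(bool \<Rightarrow> word) \<Rightarrow> letter \<Rightarrow> word" where
  "letter_img f l = (if snd l then ginv (f (fst l)) else f (fst l))"

definition endo :: "(bool \<Rightarrow> word) \<Rightarrow> word \<Rightarrow> word" where
  "endo f w = foldr (\<lambda>l acc. gmult (letter_img f l) acc) w []"

type_synonym zf = "word \<Rightarrow> int"

definition zf_elem :: "zf \<Rightarrow> bool" where
  "zf_elem a \<longleftrightarrow> finite {u. a u \<noteq> 0} \<and> (\<forall>u. a u \<noteq> 0 \<longrightarrow> reduced u)"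

definition of_grp :: "word \<Rightarrow> zf" where
  "of_grp w = (\<lambda>v. if v = w then 1 else 0)"

definition zf_zero :: zf where "zf_zero = (\<lambda>_. 0)"
definition zf_one :: zf where "zf_one = of_grp []"
definition zf_add :: "zf \<Rightarrow> zf \<Rightarrow> zf" where "zf_add a b = (\<lambda>v. a v + b v)"
definition zf_neg :: "zf \<Rightarrow> zf" where "zf_neg a = (\<lambda>v. - a v)"
definition zf_sub :: "zf \<Rightarrow> zf \<Rightarrow> zf" where "zf_sub a b = (\<lambda>v. a v - b v)"

definition zf_mult :: "zf \<Rightarrow> zf \<Rightarrow> zf" where
  "zf_mult a b = (\<lambda>v. \<Sum>p\<in>{(u, u'). a u \<noteq> 0 \<and> b u' \<noteq> 0 \<and> gmult u u' = v}.
                        a (fst p) * b (snd p))"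

definition aug :: "zf \<Rightarrow> int" where
  "aug a = (\<Sum>u\<in>{u. a u \<noteq> 0}. a u)"

definition aug_ideal :: "zf set" where
  "aug_ideal = {a. zf_elem a \<and> aug a = 0}"

inductive aug_pow :: "nat \<Rightarrow> zf \<Rightarrow> bool" where
  base: "zf_elem a \<Longrightarrow> aug_pow 0 a"
| prod: "aug_pow n a \<Longrightarrow> b \<in> aug_ideal \<Longrightarrow> aug_pow (Suc n) (zf_mult a b)"
| zero: "aug_pow (Suc n) zf_zero"
| add: "aug_pow (Suc n) a \<Longrightarrow> aug_pow (Suc n) b \<Longrightarrow> aug_pow (Suc n) (zf_add a b)"
| neg: "aug_pow (Suc n) a \<Longrightarrow> aug_pow (Suc n) (zf_neg a)"

definition fox_letter :: "bool \<Rightarrow> letter \<Rightarrow> zf" where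
  "fox_letter j l = (if fst l \<noteq> j then zf_zero
                     else if snd l then zf_neg (of_grp [l]) else zf_one)"

fun fox :: "bool \<Rightarrow> word \<Rightarrow> zf" where
  "fox j [] = zf_zero"
| "fox j (l # w) = zf_add (fox_letter j l) (zf_mult (of_grp [l]) (fox j w))"

type_synonym mat2 = "bool \<Rightarrow> bool \<Rightarrow> zf"

definition gen :: "bool \<Rightarrow> word" where
  "gen i = [(i, False)]"

definition jacobian :: "(bool \<Rightarrow> word) \<Rightarrow> mat2" where
  "jacobian f = (\<lambda>i j. fox j (endo f (gen i)))"

definition mat_one :: mat2 where
  "mat_one = (\<lambda>i j. if i = j then zf_one else zf_zero)"

definition mat_mult :: "mat2 \<Rightarrow> mat2 \<Rightarrow> mat2" where
  "mat_mult A B = (\<lambda>i k. zf_add (zf_mult (A i False) (B False k)) (zf_mult (A i True) (B True k)))"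

definition mat_invertible :: "mat2 \<Rightarrow> bool" where
  "mat_invertible A \<longleftrightarrow> (\<exists>B. (\<forall>i j. zf_elem (B i j)) \<and> mat_mult A B = mat_one \<and> mat_mult B A = mat_one)"

definition mat_trace :: "mat2 \<Rightarrow> zf" where
  "mat_trace A = zf_add (A False False) (A True True)"

section \<open>Magnus map tau: x -> 1+X, y -> 1+Y, into Z<<X,Y>>\<close>

text \<open>Monomials in X (False), Y (True) are bool lists; a power series is a coefficient function.\<close>
definition mag_letter :: "letter \<Rightarrow> bool list \<Rightarrow> int" where
  "mag_letter l m = (if \<not> snd l then (if m = [] \<or> m = [fst l] then 1 else 0)
                     else (if set m \<subseteq> {fst l} then (-1) ^ length m else 0))"

fun mag :: "word \<Rightarrow> bool list \<Rightarrow> int" where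
  "mag [] m = (if m = [] then 1 else 0)"
| "mag (l # w) m = (\<Sum>i\<le>length m. mag_letter l (take i m) * mag w (drop i m))"

definition tau :: "zf \<Rightarrow> bool list \<Rightarrow> int" where
  "tau a m = (\<Sum>u\<in>{u. a u \<noteq> 0}. a u * mag u m)"

text \<open>Degree-4 homogeneous part (identifies \<open>\<varpi>^4/\<varpi>^5\<close> with R_4).\<close>
definition deg4_part :: "(bool list \<Rightarrow> int) \<Rightarrow> bool list \<Rightarrow> int" where
  "deg4_part s = (\<lambda>m. if length m = 4 then s m else 0)"

text \<open>gamma: (Z1 Z2 Z3 Z4)^gamma = Z2 Z3 Z4 Z1, extended linearly.\<close>
definition gamma :: "(bool list \<Rightarrow> int) \<Rightarrow> bool list \<Rightarrow> int" where
  "gamma p = (\<lambda>m. \<Sum>w\<in>{w. length w = 4 \<and> rotate1 w = m}. p w)"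

definition R4 :: "(bool list \<Rightarrow> int) set" where
  "R4 = {p. \<forall>m. length m \<noteq> 4 \<longrightarrow> p m = 0}"

definition R4plus :: "(bool list \<Rightarrow> int) set" where
  "R4plus = {q. \<exists>p\<in>R4. q = (\<lambda>m. p m - gamma p m)}"

definition c_elem :: word where
  "c_elem = comm (comm gen_x gen_y) (comm (comm gen_x gen_y) gen_y)"

definition phi_gens :: "bool \<Rightarrow> word" where
  "phi_gens i = (if i then gen_y else gmult gen_x c_elem)"

end

theory Submission
  imports Defs
begin

text \<open>The word \<open>c\<close> lies in \<open>F\<^sub>5\<close> by an explicit identity writing it as a product of
  conjugates of commutators of elements of \<open>F\<^sub>4\<close> with generators, and since \<open>\<phi>\<close> moves the
  generators by elements of \<open>F\<^sub>5\<close>, so it moves every word.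

  The permutation representation \<open>x \<mapsto> (2 3)\<close>, \<open>y \<mapsto> (0 1 2)\<close> of \<open>F\<close> detects everything
  else: \<open>xc\<close> and \<open>y\<close> fix the point 3 while \<open>x\<close> does not, so \<open>x \<notin> \<phi>(F)\<close>; and the
  Jacobian is upper unitriangular except for its corner \<open>\<partial>(xc)/\<partial>x\<close>, whose image in the
  linearised representation annihilates the vector \<open>(1, -2, 1, 0)\<close>, so it is not a unit.

  By Fox's fundamental formula \<open>w - 1 = \<Sum>\<^sub>j (\<partial>w/\<partial>x\<^sub>j)(x\<^sub>j - 1)\<close>, an element of augmentation
  zero lies in \<open>\<varpi>\<^sup>k\<^sup>+\<^sup>1\<close> once its Fox derivatives lie in \<open>\<varpi>\<^sup>k\<close>; membership of the entries
  of \<open>J - 1\<close> in \<open>\<varpi>\<^sup>4\<close> is thus reduced to finitely many augmentations of iterated Fox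
  derivatives, which are computed, as is the degree-4 part of the Magnus expansion of the trace.\<close>

lemma inv_letter_inv_letter [simp]: "inv_letter (inv_letter l) = l"
  by (cases l) (simp add: inv_letter_def)

lemma reduced_Cons: "reduced (a # w) \<longleftrightarrow> reduced w \<and> (w = [] \<or> hd w \<noteq> inv_letter a)"
  by (cases w) auto

lemma reduced_snoc: "reduced (w @ [a]) \<longleftrightarrow> reduced w \<and> (w = [] \<or> a \<noteq> inv_letter (last w))"
  by (induction w rule: reduced.induct) (auto simp: inv_letter_def)

lemma reduced_red_cons [simp]: "reduced w \<Longrightarrow> reduced (red_cons l w)"
  by (cases w) (auto simp: red_cons_def reduced_Cons)

lemma red_cons_inv_letter_cancel: "reduced w \<Longrightarrow> red_cons l (red_cons (inv_letter l) w) = w"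
proof (cases w)
  case (Cons a w')
  assume "reduced w"
  with Cons show ?thesis
    by (cases "a = l"; cases w') (auto simp: red_cons_def)
qed (simp add: red_cons_def)

lemma gmult_Nil [simp]: "gmult [] v = v"
  by (simp add: gmult_def)

lemma gmult_Cons: "gmult (l # u) v = red_cons l (gmult u v)"
  by (simp add: gmult_def)

lemma gmult_append: "gmult (u @ v) w = gmult u (gmult v w)"
  by (simp add: gmult_def)

lemma reduced_gmult [simp]: "reduced v \<Longrightarrow> reduced (gmult u v)"
  by (induction u) (auto simp: gmult_Cons)

lemma gmult_red_cons: "reduced w \<Longrightarrow> gmult (red_cons l v) w = red_cons l (gmult v w)"
proof (cases v)
  case (Cons a v')
  assume "reduced w"
  then show ?thesis
    using Cons red_cons_inv_letter_cancel[of "gmult v' w" l]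
    by (cases "a = inv_letter l") (auto simp: red_cons_def gmult_Cons)
qed (simp add: red_cons_def gmult_Cons)

lemma gmult_assoc: "reduced w \<Longrightarrow> gmult (gmult u v) w = gmult u (gmult v w)"
  by (induction u) (auto simp: gmult_Cons gmult_red_cons)

lemma gmult_eq_append: "reduced (u @ v) \<Longrightarrow> gmult u v = u @ v"
proof (induction u)
  case (Cons a u)
  then show ?case
    by (cases "u @ v") (auto simp: gmult_Cons red_cons_def reduced_Cons)
qed simp

lemma gmult_Nil_right [simp]: "reduced u \<Longrightarrow> gmult u [] = u"
  using gmult_eq_append[of u "[]"] by simp

lemma ginv_Nil [simp]: "ginv [] = []"
  by (simp add: ginv_def)

lemma ginv_Cons: "ginv (l # u) = ginv u @ [inv_letter l]"
  by (simp add: ginv_def)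

lemma ginv_ginv [simp]: "ginv (ginv u) = u"
  by (simp add: ginv_def rev_map comp_def)

lemma ginv_eq_Nil [simp]: "ginv u = [] \<longleftrightarrow> u = []"
  by (simp add: ginv_def)

lemma last_ginv: "u \<noteq> [] \<Longrightarrow> last (ginv u) = inv_letter (hd u)"
  by (cases u) (auto simp: ginv_def)

lemma reduced_ginv [simp]: "reduced u \<Longrightarrow> reduced (ginv u)"
  by (induction u) (auto simp: ginv_Cons reduced_snoc reduced_Cons last_ginv ginv_eq_Nil)

lemma gmult_ginv_gmult [simp]: "reduced w \<Longrightarrow> gmult (ginv u) (gmult u w) = w"
proof (induction u)
  case (Cons a u)
  then show ?case
    using red_cons_inv_letter_cancel[of "gmult u w" "inv_letter a"]
    by (simp add: ginv_Cons gmult_append gmult_Cons)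
qed simp

lemma gmult_gmult_ginv [simp]: "reduced w \<Longrightarrow> gmult u (gmult (ginv u) w) = w"
  using gmult_ginv_gmult[of w "ginv u"] by simp

lemma gmult_ginv_right [simp]: "reduced u \<Longrightarrow> gmult u (ginv u) = []"
  using gmult_gmult_ginv[of "[]" u] by simp

lemma reduced_comm [simp]: "reduced b \<Longrightarrow> reduced (comm a b)"
  by (simp add: comm_def)

section \<open>The lower central series\<close>

lemma lcs_reduced: "lcs n w \<Longrightarrow> reduced w"
  by (induction rule: lcs.induct) auto

lemma lcs_pred: "lcs n w \<Longrightarrow> 1 < n \<Longrightarrow> lcs (n - 1) w"
proof (induction rule: lcs.induct)
  case (commI n a b)
  then show ?case
    by (cases "n = 1") (auto intro: lcs.intros lcs_reduced simp: gr0_conv_Suc)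
qed (auto intro: lcs.intros simp: gr0_conv_Suc)

lemma lcs_Nil: "lcs (Suc n) []"
proof (induction n)
  case (Suc n)
  have "comm [] [] = []" by (simp add: comm_def)
  then show ?case using lcs.commI[OF Suc, of "[]"] by simp
qed (auto intro: lcs.base)

lemma lcs_conj:
  assumes h: "lcs (Suc n) h" and g: "reduced g"
  shows "lcs (Suc n) (gmult g (gmult h (ginv g)))"
proof -
  have "lcs (Suc n) (comm h (ginv g))"
    using lcs_pred[OF lcs.commI[OF h]] g by simp
  then have "lcs (Suc n) (gmult h (comm h (ginv g)))" using lcs.multI h by blast
  moreover have "gmult h (comm h (ginv g)) = gmult g (gmult h (ginv g))"
    using lcs_reduced[OF h] g by (simp add: comm_def)
  ultimately show ?thesis by simp
qed

lemma lcs_c_elem: "lcs 5 c_elem"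
proof -
  let ?x = gen_x and ?y = gen_y and ?x' = "ginv gen_x" and ?y' = "ginv gen_y"
  define b where "b = comm (comm ?x ?y) ?y"
  define bx where "bx = comm b ?x"
  define "by" where "by = comm b ?y"
  have gens: "reduced ?x" "reduced ?y" "reduced ?x'" "reduced ?y'"
    by (simp_all add: gen_x_def gen_y_def)
  have "lcs (Suc (Suc (Suc 0))) b"
    unfolding b_def using gens by (intro lcs.commI lcs.base) simp_all
  then have b4: "lcs 4 (comm b g)" if "reduced g" for g
    using that lcs.commI by (simp add: numeral_eq_Suc)
  have c5: "lcs 5 (comm h g)" if "lcs 4 h" "reduced g" for h g
    using that lcs.commI by (simp add: numeral_eq_Suc)
  note mult5 = lcs.multI[of 4, simplified] and inv5 = lcs.invI[of 4, simplified]
    and conj5 = lcs_conj[of 4, simplified]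
  have bxy: "reduced bx" "reduced by" "lcs 4 bx" "lcs 4 by"
    by (simp_all add: bx_def by_def b4 gens)
  \<comment> \<open>Expanding \<open>[x\<^sup>-\<^sup>1y\<^sup>-\<^sup>1xy, b]\<close> by \<open>[uv, b] = v\<^sup>-\<^sup>1[u, b]v[v, b]\<close>, the factors
    \<open>[x\<^sup>\<plusminus>\<^sup>1, b]\<close> and \<open>[y\<^sup>\<plusminus>\<^sup>1, b]\<close> of \<open>F\<^sub>4\<close> cancel in pairs up to commutators with
    \<open>F\<^sub>4\<close>; this is the resulting word identity.\<close>
  have "c_elem = ginv (gmult (gmult bx (gmult
      (gmult (comm bx (ginv by)) (gmult (gmult by (gmult (gmult (comm bx ?y) (ginv (comm by ?y')))
        (ginv by))) (gmult (comm (comm b ?y') (gmult ?x ?y)) (ginv (comm bx ?x')))))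
      (ginv bx))) (comm (comm b ?x') (gmult ?y' (gmult ?x ?y))))"
    by (simp add: c_elem_def b_def bx_def by_def gen_x_def gen_y_def comm_def gmult_def
        ginv_def red_cons_def inv_letter_def)
  also have "lcs 5 \<dots>"
    using gens bxy by (intro inv5 mult5 conj5 c5 b4) simp_all
  finally show ?thesis .
qed

lemma endo_Nil [simp]: "endo f [] = []"
  by (simp add: endo_def)

lemma endo_Cons: "endo f (l # w) = gmult (letter_img f l) (endo f w)"
  by (simp add: endo_def)

lemma reduced_endo [simp]: "reduced (endo f w)"
  by (induction w) (simp_all add: endo_Cons)

lemma endo_gen: "reduced (f i) \<Longrightarrow> endo f (gen i) = f i"
  by (simp add: gen_def endo_Cons letter_img_def)

lemma lcs_endo_gmult_ginv:
  assumes reduced_f: "\<And>g. reduced (f g)"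
    and letters: "\<And>l. lcs (Suc n) (gmult (letter_img f l) [inv_letter l])"
    and w: "reduced w"
  shows "lcs (Suc n) (gmult (endo f w) (ginv w))"
  using w
proof (induction w)
  case Nil
  show ?case using lcs_Nil by simp
next
  case (Cons l w)
  have rw: "reduced w" using Cons.prems by (simp add: reduced_Cons)
  define e where "e = gmult (endo f w) (ginv w)"
  define p where "p = letter_img f l"
  have e: "lcs (Suc n) e" using Cons.IH rw by (simp add: e_def)
  have "ginv (l # w) = gmult (ginv w) [inv_letter l]"
    using Cons.prems by (simp add: ginv_Cons gmult_eq_append flip: ginv_Cons)
  then have "gmult (endo f (l # w)) (ginv (l # w)) = gmult p (gmult e [inv_letter l])"
    by (simp add: e_def p_def endo_Cons gmult_assoc rw)
  also have "\<dots> = gmult (gmult p [inv_letter l]) (gmult [l] (gmult e (ginv [l])))"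
    using gmult_ginv_gmult[of "gmult e [inv_letter l]" "[l]"]
    by (simp add: gmult_assoc ginv_def)
  also have "lcs (Suc n) \<dots>"
    using lcs.multI[OF letters lcs_conj[OF e]] by (simp add: p_def)
  finally show ?case .
qed

lemma reduced_c_elem [simp]: "reduced c_elem"
  using lcs_c_elem lcs_reduced by blast

lemma reduced_phi_gens: "reduced (phi_gens i)"
  by (simp add: phi_gens_def gen_y_def)

lemma lcs_phi_gens_gmult_ginv: "reduced w \<Longrightarrow> lcs 5 (gmult (endo phi_gens w) (ginv w))"
proof (rule lcs_endo_gmult_ginv[of _ 4, simplified])
  show "reduced (phi_gens g)" for g
    by (rule reduced_phi_gens)
  fix l :: letter
  obtain g e where l: "l = (g, e)" by (cases l)
  show "lcs 5 (gmult (letter_img phi_gens l) [inv_letter l])"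
  proof (cases g)
    case True
    then show ?thesis using l lcs_Nil[of 4]
      by (cases e) (simp_all add: letter_img_def phi_gens_def gen_y_def inv_letter_def
          gmult_def red_cons_def ginv_def numeral_eq_Suc)
  next
    case False
    have "gmult (gmult gen_x c_elem) [inv_letter (False, False)]
        = gmult gen_x (gmult c_elem (ginv gen_x))"
      by (simp add: gmult_assoc gen_x_def ginv_def inv_letter_def)
    moreover have "gmult (ginv (gmult gen_x c_elem)) [inv_letter (False, True)] = ginv c_elem"
      by (simp add: c_elem_def gen_x_def gen_y_def comm_def gmult_def ginv_def red_cons_def
          inv_letter_def)
    ultimately show ?thesis
      using l False lcs_conj[of 4, OF _ , simplified] lcs_c_elem lcs.invI[of 4, simplified]
      by (cases e) (simp_all add: letter_img_def phi_gens_def gen_x_def)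
  qed
qed

section \<open>A permutation representation\<close>

text \<open>\<open>x\<close> acts as the transposition \<open>(2 3)\<close> and \<open>y\<close> as the 3-cycle \<open>(0 1 2)\<close>.\<close>

definition perm_letter :: "letter \<Rightarrow> nat \<Rightarrow> nat" where
  "perm_letter l i = (if i < 4 then (if \<not> fst l then [0, 1, 3, 2] else if \<not> snd l then [1, 2, 0, 3]
     else [2, 0, 1, 3]) ! i else i)"

fun perm_rep :: "word \<Rightarrow> nat \<Rightarrow> nat" where
  "perm_rep [] = id"
| "perm_rep (l # w) = perm_letter l \<circ> perm_rep w"

lemma perm_letter_inv_letter: "perm_letter l (perm_letter (inv_letter l) i) = i"
proof (cases "i < 4")
  case True
  then have "i = 0 \<or> i = 1 \<or> i = 2 \<or> i = 3" by auto
  then show ?thesis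
    by (cases l) (auto simp: perm_letter_def inv_letter_def)
qed (simp add: perm_letter_def)

lemma perm_rep_red_cons: "perm_rep (red_cons l w) = perm_letter l \<circ> perm_rep w"
  by (cases w) (auto simp: red_cons_def fun_eq_iff perm_letter_inv_letter)

lemma perm_rep_gmult: "perm_rep (gmult u w) = perm_rep u \<circ> perm_rep w"
  by (induction u) (simp_all add: gmult_Cons perm_rep_red_cons comp_assoc)

lemma perm_rep_ge_4: "4 \<le> k \<Longrightarrow> perm_rep w k = k"
  by (induction w) (simp_all add: perm_letter_def)

lemma perm_rep_ginv_fix:
  assumes "reduced u" "perm_rep u k = k"
  shows "perm_rep (ginv u) k = k"
proof -
  have "perm_rep (ginv u) (perm_rep u k) = perm_rep (gmult (ginv u) u) k"
    by (simp add: perm_rep_gmult)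
  also have "\<dots> = k"
    using gmult_ginv_gmult[of "[]" u] assms(1) by simp
  finally show ?thesis using assms(2) by simp
qed

lemma perm_rep_endo_fix:
  assumes "\<And>g. reduced (f g)" "\<And>g. perm_rep (f g) k = k"
  shows "perm_rep (endo f w) k = k"
proof (induction w)
  case (Cons l w)
  have "perm_rep (letter_img f l) k = k"
    using assms perm_rep_ginv_fix by (simp add: letter_img_def)
  with Cons show ?case by (simp add: endo_Cons perm_rep_gmult)
qed simp

lemma not_bij_betw_endo_phi_gens: "\<not> bij_betw (endo phi_gens) Fgrp Fgrp"
proof
  assume "bij_betw (endo phi_gens) Fgrp Fgrp"
  moreover have "gen_x \<in> Fgrp" by (simp add: Fgrp_def gen_x_def)
  ultimately obtain w where "gen_x = endo phi_gens w"
    by (auto simp: bij_betw_def)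
  moreover have "perm_rep (endo phi_gens w) 3 = 3"
  proof (rule perm_rep_endo_fix)
    show "reduced (phi_gens g)" for g
      by (rule reduced_phi_gens)
    show "perm_rep (phi_gens g) 3 = 3" for g
      by (simp add: phi_gens_def c_elem_def gen_x_def gen_y_def comm_def gmult_def ginv_def
          red_cons_def inv_letter_def perm_letter_def)
  qed
  ultimately have "perm_rep gen_x 3 = 3" by simp
  then show False by (simp add: gen_x_def perm_letter_def)
qed

section \<open>Formal sums in the group ring\<close>

text \<open>Elements of \<open>\<int>F\<close> are handled through formal sums \<open>\<Sum> c\<^sub>i u\<^sub>i\<close>, given as lists of pairs
  \<open>(c\<^sub>i, u\<^sub>i)\<close>; two lists represent the same element iff all linear functionals agree on them.\<close>

type_synonym fsum = "(int \<times> word) list"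

definition zf_of :: "fsum \<Rightarrow> zf" where
  "zf_of L = (\<lambda>v. \<Sum>p\<leftarrow>L. if snd p = v then fst p else 0)"

definition fsum_eval :: "fsum \<Rightarrow> (word \<Rightarrow> int) \<Rightarrow> int" where
  "fsum_eval L g = (\<Sum>p\<leftarrow>L. fst p * g (snd p))"

definition fsum_mult :: "fsum \<Rightarrow> fsum \<Rightarrow> fsum" where
  "fsum_mult L M = concat (map (\<lambda>p. map (\<lambda>q. (fst p * fst q, gmult (snd p) (snd q))) M) L)"

definition fsum_neg :: "fsum \<Rightarrow> fsum" where
  "fsum_neg L = map (\<lambda>p. (- fst p, snd p)) L"

abbreviation fsum_words :: "fsum \<Rightarrow> word set" where
  "fsum_words L \<equiv> snd ` set L"

lemma fsum_eval_Nil [simp]: "fsum_eval [] g = 0"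
  by (simp add: fsum_eval_def)

lemma fsum_eval_Cons [simp]: "fsum_eval (p # L) g = fst p * g (snd p) + fsum_eval L g"
  by (simp add: fsum_eval_def)

lemma fsum_eval_append [simp]: "fsum_eval (L @ M) g = fsum_eval L g + fsum_eval M g"
  by (simp add: fsum_eval_def)

lemma fsum_eval_neg [simp]: "fsum_eval (fsum_neg L) g = - fsum_eval L g"
  by (induction L) (simp_all add: fsum_neg_def)

lemma fsum_eval_mult:
  "fsum_eval (fsum_mult L M) g = fsum_eval L (\<lambda>u. fsum_eval M (\<lambda>u'. g (gmult u u')))"
  by (induction L) (auto simp: fsum_eval_def fsum_mult_def sum_list_const_mult mult.assoc comp_def)

lemma fsum_eval_zero [simp]: "fsum_eval L (\<lambda>_. 0) = 0"
  by (induction L) simp_all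

lemma fsum_eval_swap:
  "fsum_eval L (\<lambda>u. fsum_eval M (f u)) = fsum_eval M (\<lambda>u'. fsum_eval L (\<lambda>u. f u u'))"
  by (induction L) (simp_all add: fsum_eval_def sum_list_const_mult sum_list_addf algebra_simps)

lemma fsum_eval_cong: "(\<And>u. u \<in> fsum_words L \<Longrightarrow> g u = h u) \<Longrightarrow> fsum_eval L g = fsum_eval L h"
  by (induction L) auto

lemma zf_of_support: "{u. zf_of L u \<noteq> 0} \<subseteq> fsum_words L"
  by (induction L) (auto simp: zf_of_def split: if_splits)

lemma zf_of_eq_fsum_eval: "zf_of L v = fsum_eval L (\<lambda>u. if u = v then 1 else 0)"
  by (induction L) (auto simp: zf_of_def)

lemma sum_zf_of:
  assumes "finite S" "fsum_words L \<subseteq> S"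
  shows "(\<Sum>u\<in>S. zf_of L u * g u) = fsum_eval L g"
  using assms(2)
proof (induction L)
  case (Cons p L)
  have "zf_of (p # L) u * g u = (if snd p = u then fst p * g u else 0) + zf_of L u * g u" for u
    by (simp add: zf_of_def distrib_right)
  then have "(\<Sum>u\<in>S. zf_of (p # L) u * g u)
      = (\<Sum>u\<in>S. if snd p = u then fst p * g u else 0) + (\<Sum>u\<in>S. zf_of L u * g u)"
    by (simp add: sum.distrib)
  with Cons assms(1) show ?case by (simp add: sum.delta)
qed (simp add: zf_of_def)

lemma sum_support_zf_of: "(\<Sum>u\<in>{u. zf_of L u \<noteq> 0}. zf_of L u * g u) = fsum_eval L g"
proof -
  have "(\<Sum>u\<in>{u. zf_of L u \<noteq> 0}. zf_of L u * g u) = (\<Sum>u\<in>fsum_words L. zf_of L u * g u)"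
    using zf_of_support[of L] by (intro sum.mono_neutral_left) auto
  then show ?thesis by (simp add: sum_zf_of)
qed

lemma zf_of_eq_iff: "zf_of L = zf_of M \<longleftrightarrow> (\<forall>g. fsum_eval L g = fsum_eval M g)"
proof
  assume eq: "zf_of L = zf_of M"
  show "\<forall>g. fsum_eval L g = fsum_eval M g"
  proof
    fix g
    let ?S = "fsum_words L \<union> fsum_words M"
    have "fsum_eval L g = (\<Sum>u\<in>?S. zf_of L u * g u)" by (simp add: sum_zf_of)
    also have "\<dots> = fsum_eval M g" unfolding eq by (simp add: sum_zf_of)
    finally show "fsum_eval L g = fsum_eval M g" .
  qed
qed (simp add: fun_eq_iff zf_of_eq_fsum_eval)

lemma zf_of_Nil: "zf_of [] = zf_zero"
  by (simp add: zf_of_def zf_zero_def)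

lemma of_grp_eq_zf_of: "of_grp w = zf_of [(1, w)]"
  by (auto simp: zf_of_def of_grp_def)

lemma zf_one_eq_zf_of: "zf_one = zf_of [(1, [])]"
  by (simp add: zf_one_def of_grp_eq_zf_of)

lemma zf_add_zf_of: "zf_add (zf_of L) (zf_of M) = zf_of (L @ M)"
  by (simp add: zf_of_def zf_add_def)

lemma zf_neg_zf_of: "zf_neg (zf_of L) = zf_of (fsum_neg L)"
  by (induction L) (auto simp: zf_of_def zf_neg_def fsum_neg_def fun_eq_iff)

lemma zf_sub_zf_of: "zf_sub (zf_of L) (zf_of M) = zf_of (L @ fsum_neg M)"
  using zf_neg_zf_of[of M] by (simp add: zf_of_def zf_sub_def zf_neg_def fun_eq_iff)

lemma zf_mult_zf_of: "zf_mult (zf_of L) (zf_of M) = zf_of (fsum_mult L M)"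
proof
  fix v
  let ?WL = "fsum_words L" and ?WM = "fsum_words M"
  let ?Sv = "{(u, u'). zf_of L u \<noteq> 0 \<and> zf_of M u' \<noteq> 0 \<and> gmult u u' = v}"
  have sub: "?Sv \<subseteq> ?WL \<times> ?WM" using zf_of_support[of L] zf_of_support[of M] by auto
  have "zf_mult (zf_of L) (zf_of M) v = (\<Sum>p\<in>?Sv. zf_of L (fst p) * zf_of M (snd p))"
    by (simp add: zf_mult_def)
  also have "\<dots> = (\<Sum>p\<in>?WL \<times> ?WM.
      if gmult (fst p) (snd p) = v then zf_of L (fst p) * zf_of M (snd p) else 0)"
    by (rule sum.mono_neutral_cong_left) (use sub in auto)
  also have "\<dots> = (\<Sum>u\<in>?WL. \<Sum>u'\<in>?WM. if gmult u u' = v then zf_of L u * zf_of M u' else 0)"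
    by (simp add: sum.cartesian_product split_def)
  also have "\<dots> = (\<Sum>u\<in>?WL. zf_of L u * (\<Sum>u'\<in>?WM. zf_of M u' * (if gmult u u' = v then 1 else 0)))"
    by (simp add: sum_distrib_left if_distrib mult.assoc mult.left_commute cong: if_cong)
  also have "\<dots> = fsum_eval L (\<lambda>u. fsum_eval M (\<lambda>u'. if gmult u u' = v then 1 else 0))"
    by (simp add: sum_zf_of)
  also have "\<dots> = zf_of (fsum_mult L M) v"
    by (simp add: zf_of_eq_fsum_eval fsum_eval_mult)
  finally show "zf_mult (zf_of L) (zf_of M) v = zf_of (fsum_mult L M) v" .
qed

lemma zf_elem_zf_of: "(\<And>u. u \<in> fsum_words L \<Longrightarrow> reduced u) \<Longrightarrow> zf_elem (zf_of L)"
  using zf_of_support[of L] finite_subset[OF zf_of_support[of L]]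
  unfolding zf_elem_def by blast

lemma zf_elem_obtain_zf_of:
  assumes "zf_elem a"
  obtains L where "a = zf_of L"
proof -
  have "finite {u. a u \<noteq> 0}" using assms by (simp add: zf_elem_def)
  then obtain xs where xs: "set xs = {u. a u \<noteq> 0}" "distinct xs"
    using finite_distinct_list by blast
  have "zf_of (map (\<lambda>u. (a u, u)) xs) v = a v" for v
  proof -
    have "zf_of (map (\<lambda>u. (a u, u)) xs) v = (\<Sum>u\<in>set xs. if u = v then a u else 0)"
      using xs(2) by (simp add: zf_of_def comp_def sum_list_distinct_conv_sum_set)
    also have "\<dots> = (if v \<in> set xs then a v else 0)"
      by (simp add: sum.delta)
    also have "\<dots> = a v"
      using xs(1) by auto
    finally show ?thesis .
  qed
  then show ?thesis using that[of "map (\<lambda>u. (a u, u)) xs"] by (simp add: fun_eq_iff)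
qed

lemma aug_zf_of: "aug (zf_of L) = (\<Sum>p\<leftarrow>L. fst p)"
  using sum_support_zf_of[of L "\<lambda>_. 1"] by (simp add: aug_def fsum_eval_def)

lemma tau_zf_of: "tau (zf_of L) m = fsum_eval L (\<lambda>u. mag u m)"
  by (simp add: tau_def sum_support_zf_of)

section \<open>Fox calculus\<close>

definition fox_letter_fsum :: "bool \<Rightarrow> letter \<Rightarrow> fsum" where
  "fox_letter_fsum j l = (if fst l \<noteq> j then [] else if snd l then [(-1, [l])] else [(1, [])])"

fun fox_fsum :: "bool \<Rightarrow> word \<Rightarrow> fsum" where
  "fox_fsum j [] = []"
| "fox_fsum j (l # w) = fox_letter_fsum j l @ fsum_mult [(1, [l])] (fox_fsum j w)"

lemma fox_eq_zf_of: "fox j w = zf_of (fox_fsum j w)"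
proof -
  have "fox_letter j l = zf_of (fox_letter_fsum j l)" for l
    by (simp add: fox_letter_def fox_letter_fsum_def zf_of_Nil zf_one_eq_zf_of zf_neg_zf_of
        fsum_neg_def of_grp_eq_zf_of)
  then show ?thesis
    by (induction w) (simp_all add: zf_of_Nil of_grp_eq_zf_of zf_mult_zf_of zf_add_zf_of)
qed

lemma reduced_fsum_mult:
  "(\<And>v. v \<in> fsum_words M \<Longrightarrow> reduced v) \<Longrightarrow> u \<in> fsum_words (fsum_mult L M) \<Longrightarrow> reduced u"
  by (force simp: fsum_mult_def)

lemma reduced_fox_fsum: "u \<in> fsum_words (fox_fsum j w) \<Longrightarrow> reduced u"
proof (induction w arbitrary: u)
  case (Cons l w)
  then show ?case
    using reduced_fsum_mult[OF Cons.IH] by (auto simp: fox_letter_fsum_def split: if_splits)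
qed simp

definition fox_lin :: "bool \<Rightarrow> fsum \<Rightarrow> fsum" where
  "fox_lin j L = concat (map (\<lambda>p. map (\<lambda>q. (fst p * fst q, snd q)) (fox_fsum j (snd p))) L)"

lemma fsum_eval_fox_lin:
  "fsum_eval (fox_lin j L) h = (\<Sum>p\<leftarrow>L. fst p * fsum_eval (fox_fsum j (snd p)) h)"
  by (induction L) (simp_all add: fox_lin_def fsum_eval_def sum_list_const_mult comp_def mult.assoc)

lemma reduced_fox_lin: "u \<in> fsum_words (fox_lin j L) \<Longrightarrow> reduced u"
  using reduced_fox_fsum by (force simp: fox_lin_def)

text \<open>Fox's fundamental formula \<open>w - 1 = \<Sum>\<^sub>j (\<partial>w/\<partial>x\<^sub>j)(x\<^sub>j - 1)\<close>, paired with an arbitrary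
  functional \<open>g\<close>.\<close>

lemma fox_fundamental_formula:
  assumes "reduced w"
  shows "g w - g [] = (\<Sum>j\<in>UNIV. fsum_eval (fox_fsum j w) (\<lambda>v. g (gmult v (gen j)) - g v))"
  using assms
proof (induction w arbitrary: g)
  case (Cons l w)
  have rw: "reduced w" using Cons.prems by (simp add: reduced_Cons)
  have rgen: "reduced (gen j)" for j by (simp add: gen_def)
  have letter: "(\<Sum>j\<in>UNIV. fsum_eval (fox_letter_fsum j l) (\<lambda>v. g (gmult v (gen j)) - g v))
      = g [l] - g []"
    by (cases l) (auto simp: fox_letter_fsum_def gen_def gmult_def red_cons_def inv_letter_def
        UNIV_bool)
  have "g (l # w) - g [] = (g (gmult [l] w) - g (gmult [l] [])) + (g [l] - g [])"
    using Cons.prems by (simp add: gmult_eq_append)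
  also have "g (gmult [l] w) - g (gmult [l] []) = (\<Sum>j\<in>UNIV. fsum_eval (fox_fsum j w)
      (\<lambda>v. g (gmult [l] (gmult v (gen j))) - g (gmult [l] v)))"
    using Cons.IH[OF rw, of "\<lambda>v. g (gmult [l] v)"] by simp
  finally show ?case
    using letter by (simp add: fsum_eval_mult gmult_assoc rgen sum.distrib)
qed simp

definition gen_minus_one :: "bool \<Rightarrow> fsum" where
  "gen_minus_one j = [(1, gen j), (-1, [])]"

lemma gen_minus_one_in_aug_ideal: "zf_of (gen_minus_one j) \<in> aug_ideal"
  by (auto simp: aug_ideal_def gen_minus_one_def aug_zf_of gen_def intro!: zf_elem_zf_of)

lemma zf_of_eq_fox_expansion:
  assumes reduced: "\<And>u. u \<in> fsum_words L \<Longrightarrow> reduced u" and aug: "(\<Sum>p\<leftarrow>L. fst p) = 0"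
  shows "zf_of L = zf_add (zf_mult (zf_of (fox_lin False L)) (zf_of (gen_minus_one False)))
                          (zf_mult (zf_of (fox_lin True L)) (zf_of (gen_minus_one True)))"
  unfolding zf_mult_zf_of zf_add_zf_of zf_of_eq_iff
proof
  fix g :: "word \<Rightarrow> int"
  define h where "h j v = g (gmult v (gen j)) - g v" for j v
  have mult: "fsum_eval (fsum_mult (fox_lin j L) (gen_minus_one j)) g
      = fsum_eval (fox_lin j L) (h j)" for j
    unfolding fsum_eval_mult h_def
    by (rule fsum_eval_cong) (simp add: gen_minus_one_def reduced_fox_lin)
  have "fsum_eval (fsum_mult (fox_lin False L) (gen_minus_one False) @
      fsum_mult (fox_lin True L) (gen_minus_one True)) g
      = (\<Sum>p\<leftarrow>L. fst p * (\<Sum>j\<in>UNIV. fsum_eval (fox_fsum j (snd p)) (h j)))"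
    by (simp add: mult fsum_eval_fox_lin UNIV_bool distrib_left sum_list_addf)
  also have "\<dots> = (\<Sum>p\<leftarrow>L. fst p * (g (snd p) - g []))"
    using fox_fundamental_formula[OF reduced, of _ g] unfolding h_def
    by (intro arg_cong[where f = sum_list] map_cong) auto
  also have "\<dots> = fsum_eval L g - (\<Sum>p\<leftarrow>L. fst p) * g []"
    by (simp add: fsum_eval_def right_diff_distrib sum_list_subtractf sum_list_mult_const)
  finally show "fsum_eval L g = fsum_eval (fsum_mult (fox_lin False L) (gen_minus_one False) @
      fsum_mult (fox_lin True L) (gen_minus_one True)) g"
    by (simp add: aug)
qed

lemma aug_pow_Suc_of_fox:
  assumes "\<And>u. u \<in> fsum_words L \<Longrightarrow> reduced u" and "(\<Sum>p\<leftarrow>L. fst p) = 0"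
    and "\<And>j. aug_pow k (zf_of (fox_lin j L))"
  shows "aug_pow (Suc k) (zf_of L)"
proof -
  have "aug_pow (Suc k) (zf_add (zf_mult (zf_of (fox_lin False L)) (zf_of (gen_minus_one False)))
                               (zf_mult (zf_of (fox_lin True L)) (zf_of (gen_minus_one True))))"
    by (intro aug_pow.add aug_pow.prod assms(3) gen_minus_one_in_aug_ideal)
  then show ?thesis
    by (simp flip: zf_of_eq_fox_expansion[OF assms(1,2)])
qed

fun fsum_insert :: "int \<times> word \<Rightarrow> fsum \<Rightarrow> fsum" where
  "fsum_insert p [] = (if fst p = 0 then [] else [p])"
| "fsum_insert p (q # M) = (if snd q = snd p
     then (if fst p + fst q = 0 then M else (fst p + fst q, snd q) # M)
     else q # fsum_insert p M)"

definition fsum_normalize :: "fsum \<Rightarrow> fsum" where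
  "fsum_normalize L = foldr fsum_insert L []"

lemma fsum_eval_insert: "fsum_eval (fsum_insert p M) g = fst p * g (snd p) + fsum_eval M g"
proof (induction M)
  case (Cons q M)
  have "fst p * g (snd q) + fst q * g (snd q) = (fst p + fst q) * g (snd q)"
    by (simp add: distrib_right)
  with Cons show ?case by auto
qed simp

lemma fsum_eval_normalize [simp]: "fsum_eval (fsum_normalize L) g = fsum_eval L g"
  by (induction L) (simp_all add: fsum_normalize_def fsum_eval_insert)

text \<open>Normalising the iterated derivatives keeps the certificate small enough to evaluate.\<close>

fun aug_pow_cert :: "nat \<Rightarrow> fsum \<Rightarrow> bool" where
  "aug_pow_cert 0 L = (\<forall>p\<in>set L. reduced (snd p))"
| "aug_pow_cert (Suc k) L = ((\<forall>p\<in>set L. reduced (snd p)) \<and> (\<Sum>p\<leftarrow>L. fst p) = 0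
     \<and> aug_pow_cert k (fsum_normalize (fox_lin False L))
     \<and> aug_pow_cert k (fsum_normalize (fox_lin True L)))"

lemma aug_pow_cert_sound: "aug_pow_cert k L \<Longrightarrow> aug_pow k (zf_of L)"
proof (induction k arbitrary: L)
  case 0
  then show ?case by (auto intro!: aug_pow.base zf_elem_zf_of)
next
  case (Suc k)
  have "aug_pow k (zf_of (fox_lin j L))" for j
  proof -
    have "aug_pow_cert k (fsum_normalize (fox_lin j L))"
      using Suc.prems by (cases j) simp_all
    then have "aug_pow k (zf_of (fsum_normalize (fox_lin j L)))" by (rule Suc.IH)
    moreover have "zf_of (fsum_normalize (fox_lin j L)) = zf_of (fox_lin j L)"
      by (simp add: zf_of_eq_iff)
    ultimately show ?thesis by simp
  qed
  with Suc.prems show ?case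
    by (intro aug_pow_Suc_of_fox) auto
qed

text \<open>Extending the permutation representation linearly gives a right action of \<open>\<int>F\<close> on
  integer vectors indexed by \<open>\<nat>\<close>.\<close>

definition perm_act :: "fsum \<Rightarrow> (nat \<Rightarrow> int) \<Rightarrow> nat \<Rightarrow> int" where
  "perm_act L v k = fsum_eval L (\<lambda>u. v (perm_rep u k))"

lemma perm_act_cong: "zf_of L = zf_of M \<Longrightarrow> perm_act L = perm_act M"
  unfolding zf_of_eq_iff by (simp add: fun_eq_iff perm_act_def)

lemma perm_act_append: "perm_act (L @ M) v k = perm_act L v k + perm_act M v k"
  by (simp add: perm_act_def)

lemma perm_act_mult: "perm_act (fsum_mult L M) v = perm_act M (perm_act L v)"
  by (simp add: fun_eq_iff perm_act_def fsum_eval_mult perm_rep_gmult fsum_eval_swap[of L M])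

lemma perm_act_one [simp]: "perm_act [(1, [])] v = v"
  by (simp add: perm_act_def fun_eq_iff)

lemma perm_act_zero [simp]: "perm_act L (\<lambda>_. 0) = (\<lambda>_. 0)"
  by (simp add: perm_act_def fun_eq_iff)

text \<open>An invertible matrix with second row \<open>(0, 1)\<close> has an invertible corner entry, so its
  image under a representation annihilates no nonzero vector.\<close>

lemma not_mat_invertible_if_perm_act_kills:
  assumes A: "A True False = zf_zero" "A True True = zf_one" "zf_elem (A False True)"
    "A False False = zf_of L"
    and kill: "perm_act L v = (\<lambda>_. 0)" and v: "v \<noteq> (\<lambda>_. 0)"
  shows "\<not> mat_invertible A"
proof
  assume "mat_invertible A"
  then obtain B where B: "\<forall>i j. zf_elem (B i j)" "mat_mult A B = mat_one"
    by (auto simp: mat_invertible_def)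
  obtain P where P: "B False False = zf_of P" using zf_elem_obtain_zf_of B(1) by metis
  obtain T where T: "B True False = zf_of T" using zf_elem_obtain_zf_of B(1) by metis
  obtain M where M: "A False True = zf_of M" using zf_elem_obtain_zf_of A(3) by metis
  have "mat_mult A B True False = mat_one True False" using B(2) by simp
  then have "zf_of (fsum_mult [] P @ fsum_mult [(1, [])] T) = zf_of []"
    by (simp add: mat_mult_def A P T zf_mult_zf_of zf_add_zf_of mat_one_def zf_one_eq_zf_of
        flip: zf_of_Nil)
  from perm_act_cong[OF this] have T0: "perm_act T w = (\<lambda>_. 0)" for w
    by (simp add: fun_eq_iff perm_act_append perm_act_mult) (simp add: perm_act_def)
  have "mat_mult A B False False = mat_one False False" using B(2) by simp
  then have "zf_of (fsum_mult L P @ fsum_mult M T) = zf_of [(1, [])]"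
    by (simp add: mat_mult_def A M P T zf_mult_zf_of zf_add_zf_of mat_one_def zf_one_eq_zf_of)
  from perm_act_cong[OF this]
  have "perm_act P (perm_act L v) k + perm_act T (perm_act M v) k = v k" for k
    by (metis perm_act_append perm_act_mult perm_act_one)
  then show False
    using v by (simp add: kill T0 fun_eq_iff)
qed

section \<open>The Magnus expansion\<close>

text \<open>Multiplying a series by \<open>\<tau>(x) = 1 + X\<close>, resp. by \<open>\<tau>(x\<^sup>-\<^sup>1) = 1 - X + X\<^sup>2 - \<dots>\<close>, in terms of
  coefficients.\<close>

lemma mag_Cons_Nil: "mag (l # w) [] = mag w []"
  by (simp add: mag_letter_def)

lemma mag_Cons_Cons:
  "mag (l # w) (h # t) = mag w (h # t)
     + (if h \<noteq> fst l then 0 else if snd l then - mag (l # w) t else mag w t)"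
proof -
  have split: "mag (l # w) (h # t) = mag w (h # t)
      + (\<Sum>i\<le>length t. mag_letter l (h # take i t) * mag w (drop i t))"
    by (simp only: mag.simps length_Cons sum.atMost_Suc_shift take_0 drop_0 take_Suc_Cons
        drop_Suc_Cons) (simp add: mag_letter_def)
  show ?thesis
  proof (cases "snd l")
    case True
    have "(\<Sum>i\<le>length t. mag_letter l (h # take i t) * mag w (drop i t))
        = (\<Sum>i\<le>length t. if h = fst l then - (mag_letter l (take i t) * mag w (drop i t)) else 0)"
      using True by (intro sum.cong) (auto simp: mag_letter_def)
    with True split show ?thesis by (simp add: sum_negf)
  next
    case False
    have "(\<Sum>i\<le>length t. mag_letter l (h # take i t) * mag w (drop i t))
        = (\<Sum>i\<le>length t. if i = 0 \<and> h = fst l then mag w t else 0)"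
      using False by (intro sum.cong) (auto simp: mag_letter_def)
    with False split show ?thesis by simp
  qed
qed

lemma gamma_eq: "gamma p m = (if length m = 4 then p (last m # butlast m) else 0)"
proof -
  have "{w. length w = 4 \<and> rotate1 w = m} = (if length m = 4 then {last m # butlast m} else {})"
  proof (cases "length m = 4")
    case True
    have "length w = 4 \<and> rotate1 w = m \<longleftrightarrow> w = last m # butlast m" for w
    proof
      assume "length w = 4 \<and> rotate1 w = m"
      then show "w = last m # butlast m" by (cases w) auto
    next
      assume "w = last m # butlast m"
      with True show "length w = 4 \<and> rotate1 w = m"
        by (cases m rule: rev_cases) auto
    qed
    with True show ?thesis by auto
  qed auto
  then show ?thesis by (simp add: gamma_def)
qed

lemma length_eq_4_cases: "length m = 4 \<Longrightarrow> \<exists>a b c d. m = [a, b, c, d]"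
  by (simp add: length_Suc_conv numeral_eq_Suc) blast

lemmas word_eval_simps = c_elem_def gen_x_def gen_y_def comm_def gmult_def ginv_def red_cons_def
  inv_letter_def fox_letter_fsum_def fsum_mult_def

lemma jacobian_phi_gens: "jacobian phi_gens i j = zf_of (fox_fsum j (phi_gens i))"
  by (simp add: jacobian_def endo_gen reduced_phi_gens fox_eq_zf_of)

lemma jacobian_phi_gens_minus_one:
  "zf_sub (jacobian phi_gens i j) (mat_one i j)
     = zf_of (fox_fsum j (phi_gens i) @ (if i = j then [(-1, [])] else []))"
  by (simp add: jacobian_phi_gens mat_one_def zf_one_eq_zf_of zf_sub_zf_of fsum_neg_def
      flip: zf_of_Nil)

lemma aug_pow_jacobian_phi_gens_minus_one:
  "aug_pow 4 (zf_sub (jacobian phi_gens i j) (mat_one i j))"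
proof -
  have "aug_pow_cert 4 (fox_fsum j (phi_gens i) @ (if i = j then [(-1, [])] else []))"
    by (cases i; cases j) (simp_all add: phi_gens_def word_eval_simps fox_lin_def
        fsum_normalize_def numeral_eq_Suc)
  then show ?thesis
    unfolding jacobian_phi_gens_minus_one by (rule aug_pow_cert_sound)
qed

lemma deg4_part_trace_jacobian_phi_gens:
  "deg4_part (tau (mat_trace (\<lambda>i j. zf_sub (jacobian phi_gens i j) (mat_one i j)))) \<in> R4plus"
proof -
  let ?L = "fox_fsum False (phi_gens False) @ [(-1, [])]"
  have trace: "mat_trace (\<lambda>i j. zf_sub (jacobian phi_gens i j) (mat_one i j)) = zf_of ?L"
    by (simp add: mat_trace_def jacobian_phi_gens_minus_one zf_add_zf_of zf_of_eq_iff)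
      (simp add: phi_gens_def word_eval_simps)
  \<comment> \<open>With \<open>X = False\<close>, \<open>Y = True\<close>: the degree-4 part is \<open>2XYYY - 3YXYY + YYXY = p - \<gamma>p\<close>.\<close>
  define p :: "bool list \<Rightarrow> int" where
    "p m = (if m = [True, False, True, True] then -2 else if m = [True, True, False, True] then 1
      else 0)" for m
  have "deg4_part (tau (zf_of ?L)) m = p m - gamma p m" for m
  proof (cases "length m = 4")
    case True
    then obtain a b c d where m: "m = [a, b, c, d]" using length_eq_4_cases by blast
    show ?thesis unfolding m
      by (cases a; cases b; cases c; cases d)
        (simp_all add: deg4_part_def tau_zf_of p_def gamma_eq phi_gens_def word_eval_simps
          mag_Cons_Nil mag_Cons_Cons del: mag.simps(2))
  qed (auto simp: deg4_part_def gamma_eq p_def)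
  moreover have "p \<in> R4" by (simp add: R4_def p_def)
  ultimately show ?thesis
    unfolding trace R4plus_def by blast
qed

lemma not_mat_invertible_jacobian_phi_gens: "\<not> mat_invertible (jacobian phi_gens)"
proof (rule not_mat_invertible_if_perm_act_kills)
  show "jacobian phi_gens True False = zf_zero" "jacobian phi_gens True True = zf_one"
    by (simp_all add: jacobian_phi_gens phi_gens_def gen_y_def fox_letter_fsum_def
        fsum_mult_def zf_one_eq_zf_of flip: zf_of_Nil)
  show "zf_elem (jacobian phi_gens False True)"
    by (simp add: jacobian_phi_gens zf_elem_zf_of reduced_fox_fsum)
  show "jacobian phi_gens False False = zf_of (fox_fsum False (phi_gens False))"
    by (rule jacobian_phi_gens)
  let ?v = "\<lambda>k. if k < 3 then [1, -2, 1] ! k else 0 :: int"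
  show "?v \<noteq> (\<lambda>_. 0)"
    using fun_cong[of ?v "\<lambda>_. 0" 0] by auto
  show "perm_act (fox_fsum False (phi_gens False)) ?v = (\<lambda>_. 0)"
  proof
    fix k :: nat
    show "perm_act (fox_fsum False (phi_gens False)) ?v k = 0"
    proof (cases "k < 4")
      case True
      then consider "k = 0" | "k = 1" | "k = 2" | "k = 3" by linarith
      then show ?thesis
        by cases (simp_all add: perm_act_def phi_gens_def word_eval_simps perm_letter_def)
    qed (simp add: perm_act_def perm_rep_ge_4)
  qed
qed

theorem mainTheorem13:
  shows "lcs 5 c_elem
    \<and> (\<forall>w. reduced w \<longrightarrow> lcs 5 (gmult (endo phi_gens w) (ginv w)))
    \<and> \<not> bij_betw (endo phi_gens) Fgrp Fgrp
    \<and> (\<forall>i j. aug_pow 4 (zf_sub (jacobian phi_gens i j) (mat_one i j)))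
    \<and> deg4_part (tau (mat_trace (\<lambda>i j. zf_sub (jacobian phi_gens i j) (mat_one i j)))) \<in> R4plus
    \<and> \<not> mat_invertible (jacobian phi_gens)"
  using lcs_c_elem lcs_phi_gens_gmult_ginv not_bij_betw_endo_phi_gens aug_pow_jacobian_phi_gens_minus_one
    deg4_part_trace_jacobian_phi_gens not_mat_invertible_jacobian_phi_gens
  by blast

end
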